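(* Let $f: \mathbb{R}^n \to \mathbb{R}^n$ be topical, $\lambda \in \mathbb{R}$ and $k$ a positive integer. If $S^\lambda(f^k) \neq \emptyset$, then $S^{\lambda/k}(f) \neq \emptyset$.
   Context: $f$ is topical if $f(x+h) = f(x)+h$ for all $h\in\mathbb{R}$ (scalar added to each coordinate) and $x\le y$ componentwise implies $f(x)\le f(y)$. For a map $g$, $S^\lambda(g) = \{x\in\mathbb{R}^n : g(x) \le \lambda + x\}$. *)

theory Defs
  imports "HOL-Analysis.Analysis"
begin

definition add_scalar :: "real ^ 'n \<Rightarrow> real \<Rightarrow> real ^ 'n" where
  "add_scalar x h = (\<chi> i. x $ i + h)"

definition topical :: "(real ^ 'n \<Rightarrow> real ^ 'n) \<Rightarrow> bool" where
  "topical f \<longleftrightarrow>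
     (\<forall>x h. f (add_scalar x h) = add_scalar (f x) h) \<and>
     (\<forall>x y. (\<forall>i. x $ i \<le> y $ i) \<longrightarrow> (\<forall>i. f x $ i \<le> f y $ i))"

definition subeig :: "real \<Rightarrow> (real ^ 'n \<Rightarrow> real ^ 'n) \<Rightarrow> (real ^ 'n) set" where
  "subeig lam g = {x. \<forall>i. g x $ i \<le> lam + x $ i}"

end

theory Submission
  imports Defs
begin

text \<open>
  Let x lie in S^lambda(f^k), put mu = lambda/k and w_j = f^j(x) - j mu, and let y be the
  componentwise infimum of w_0, ..., w_(k-1). By monotonicity and additive homogeneity,
  f(y) - mu <= w_(j+1) for every j < k; since w_k <= w_0, this bounds f(y) - mu by every
  w_j with j < k, hence by y.
\<close>

lemma add_scalar_eq_plus_vec: "add_scalar x h = x + vec h"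
  by (simp add: add_scalar_def vec_eq_iff)

lemma subeig_eq: "subeig lam g = {x. g x \<le> x + vec lam}"
  by (auto simp: subeig_def less_eq_vec_def add.commute)

lemma topical_plus_vec:
  assumes "topical f"
  shows "f (x + vec h) = f x + vec h"
  using assms by (simp add: topical_def flip: add_scalar_eq_plus_vec)

lemma topical_minus_vec:
  assumes "topical f"
  shows "f (x - vec h) = f x - vec h"
  using topical_plus_vec[OF assms, of x "- h"] by (simp add: vec_neg)

lemma topical_mono:
  assumes "topical f"
  shows "mono f"
  using assms by (auto simp: topical_def mono_def less_eq_vec_def)

lemma topical_subeig_Inf_orbit:
  fixes f :: "real ^ 'n \<Rightarrow> real ^ 'n" and x :: "real ^ 'n" and mu :: real
  defines "w \<equiv> \<lambda>j. (f ^^ j) x - vec (real j * mu)"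
  assumes f: "topical f" and "k > 0" and x: "(f ^^ k) x \<le> x + vec (real k * mu)"
  shows "Inf (w ` {..<k}) \<in> subeig mu f"
proof -
  define y where "y = Inf (w ` {..<k})"
  have y_le: "y \<le> w j" if "j < k" for j
    unfolding y_def using that by (intro cInf_lower) auto
  have fy_le_succ: "f y - vec mu \<le> w (Suc j)" if "j < k" for j
  proof -
    have "f y \<le> f (w j)"
      using topical_mono[OF f] y_le[OF that] by (rule monoD)
    also have "f (w j) = w (Suc j) + vec mu"
      by (simp add: w_def topical_minus_vec[OF f] algebra_simps flip: vec_add)
    finally show ?thesis
      by (simp add: algebra_simps)
  qed
  have wk_le_w0: "w k \<le> w 0"
    using x by (simp add: w_def algebra_simps)
  have "f y - vec mu \<le> w j" if "j < k" for j
  proof (cases j)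
    case 0
    then show ?thesis
      using fy_le_succ[of "k - 1"] \<open>k > 0\<close> wk_le_w0 by simp
  next
    case (Suc i)
    then show ?thesis
      using fy_le_succ[of i] that by simp
  qed
  then have "f y - vec mu \<le> y"
    unfolding y_def using \<open>k > 0\<close> by (intro cInf_greatest) auto
  then show ?thesis
    by (simp add: subeig_eq y_def algebra_simps)
qed

theorem lemma2p2:
  fixes f :: "real ^ 'n \<Rightarrow> real ^ 'n" and lam :: real and k :: nat
  assumes "topical f" and "k > 0" and "subeig lam (f ^^ k) \<noteq> {}"
  shows "subeig (lam / real k) f \<noteq> {}"
proof -
  obtain x where "(f ^^ k) x \<le> x + vec lam"
    using assms(3) by (auto simp: subeig_eq)
  moreover have "lam = real k * (lam / real k)"
    using assms(2) by simp
  ultimately have "(f ^^ k) x \<le> x + vec (real k * (lam / real k))"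
    by simp
  then show ?thesis
    using topical_subeig_Inf_orbit[OF assms(1,2)] by blast
qed

end
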